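(* Let $G$ be a graph, $k,\ell\ge1$, $S$ an independent set of size $k$, and $J_0=S,J_1,\dots,J_\ell$ independent sets of $G$. Define $\mathcal{C}_0=\{\{(S,k)\}\}$ and, for $i\in\{1,\dots,\ell\}$, let $\mathcal{C}_i$ contain, for every $C\in\mathcal{C}_{i-1}$ and every constraint $(X,b)\in C$, the constraint set $C'$ consisting of: $(N(X)\cap J_i,1)$; $(X\cap J_i,b-1)$ if $b\ge2$ (nothing if $b=1$); and $(X'\cap J_i,b')$ for every other constraint $(X',b')\in C$. Then for every $i\in\{0,\dots,\ell\}$, $\sum_{C\in\mathcal{C}_i}|C|\le (i+1)!$; in particular $\sum_{C\in\mathcal{C}_\ell}|C|\le(\ell+1)!$.
   Context: A constraint is a pair $(X,b)$ with $X\subseteq V(G)$ and $b$ a positive integer; a constraint set is a finite collection of constraints. The collections $\mathcal{C}_i$ and constraint sets are taken with multiplicity (one $C'$ per pair $(C,(X,b))$), and $|C|$ is the number of constraints in $C$. For $X\subseteq V(G)$, $N(X)=\{v\notin X: v\text{ adjacent to some }u\in X\}$. *)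

theory Defs
  imports Main "HOL-Library.Multiset"
begin

definition graph :: "'a set \<Rightarrow> ('a \<Rightarrow> 'a \<Rightarrow> bool) \<Rightarrow> bool" where
  "graph V E \<longleftrightarrow> finite V \<and> (\<forall>u v. E u v \<longrightarrow> u \<in> V \<and> v \<in> V)
     \<and> (\<forall>u v. E u v \<longrightarrow> E v u) \<and> (\<forall>u. \<not> E u u)"

definition indep_set :: "'a set \<Rightarrow> ('a \<Rightarrow> 'a \<Rightarrow> bool) \<Rightarrow> 'a set \<Rightarrow> bool" where
  "indep_set V E I \<longleftrightarrow> I \<subseteq> V \<and> (\<forall>u\<in>I. \<forall>v\<in>I. \<not> E u v)"

definition nbhd :: "'a set \<Rightarrow> ('a \<Rightarrow> 'a \<Rightarrow> bool) \<Rightarrow> 'a set \<Rightarrow> 'a set" where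
  "nbhd V E X = {v \<in> V. v \<notin> X \<and> (\<exists>u\<in>X. E u v)}"

type_synonym 'a constr = "'a set \<times> nat"

definition branch :: "'a set \<Rightarrow> ('a \<Rightarrow> 'a \<Rightarrow> bool) \<Rightarrow> 'a set
    \<Rightarrow> 'a constr multiset \<Rightarrow> 'a constr \<Rightarrow> 'a constr multiset" where
  "branch V E J C c = (case c of (X, b) \<Rightarrow>
     {# (nbhd V E X \<inter> J, 1) #}
     + (if b \<ge> 2 then {# (X \<inter> J, b - 1) #} else {#})
     + image_mset (\<lambda>(X', b'). (X' \<inter> J, b')) (C - {# c #}))"

definition step :: "'a set \<Rightarrow> ('a \<Rightarrow> 'a \<Rightarrow> bool) \<Rightarrow> 'a set
    \<Rightarrow> 'a constr multiset multiset \<Rightarrow> 'a constr multiset multiset" where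
  "step V E J \<C> = (\<Sum>C\<in>#\<C>. image_mset (branch V E J C) C)"

fun constr_sets :: "'a set \<Rightarrow> ('a \<Rightarrow> 'a \<Rightarrow> bool) \<Rightarrow> (nat \<Rightarrow> 'a set) \<Rightarrow> 'a set \<Rightarrow> nat
    \<Rightarrow> nat \<Rightarrow> 'a constr multiset multiset" where
  "constr_sets V E J S k 0 = {# {# (S, k) #} #}"
| "constr_sets V E J S k (Suc i) = step V E (J (Suc i)) (constr_sets V E J S k i)"

end

theory Submission
  imports Defs
begin

text \<open>Branching on a constraint of C removes it and adds at most two new ones, so every
  constraint set of level i has at most i + 1 constraints. Each constraint set C of level i
  spawns size C sets of level i + 1, each of size at most size C + 1 \<le> i + 2; hence the
  total size grows at most by the factor i + 2 from one level to the next, giving (i + 1)!.\<close>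

lemma size_branch_le:
  assumes "c \<in># C"
  shows "size (branch V E J C c) \<le> size C + 1"
proof -
  obtain X b where c: "c = (X, b)" by fastforce
  have "size (branch V E J C c) \<le> 2 + size (C - {#c#})"
    by (simp add: branch_def c)
  also have "\<dots> = size C + 1"
    using assms by (auto dest: multi_member_split)
  finally show ?thesis .
qed

lemma mem_step_iff:
  "C' \<in># step V E J M \<longleftrightarrow> (\<exists>C\<in>#M. \<exists>c\<in>#C. C' = branch V E J C c)"
  by (auto simp: step_def)

lemma sum_size_step:
  "(\<Sum>C'\<in>#step V E J M. size C') = (\<Sum>C\<in>#M. \<Sum>c\<in>#C. size (branch V E J C c))"
  by (induction M) (simp_all add: step_def multiset.map_comp comp_def)

lemma size_step_le:
  assumes "\<forall>C\<in>#M. size C \<le> n" and "C' \<in># step V E J M"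
  shows "size C' \<le> n + 1"
proof -
  obtain C c where "C \<in># M" "c \<in># C" "C' = branch V E J C c"
    using assms(2) by (auto simp: mem_step_iff)
  then have "size C' \<le> size C + 1" using size_branch_le by blast
  with assms(1) \<open>C \<in># M\<close> show ?thesis by fastforce
qed

lemma sum_size_step_le:
  assumes "\<forall>C\<in>#M. size C \<le> n"
  shows "(\<Sum>C'\<in>#step V E J M. size C') \<le> (n + 1) * (\<Sum>C\<in>#M. size C)"
proof -
  have "(\<Sum>c\<in>#C. size (branch V E J C c)) \<le> (n + 1) * size C" if "C \<in># M" for C
  proof -
    have "(\<Sum>c\<in>#C. size (branch V E J C c)) \<le> (\<Sum>c\<in>#C. size C + 1)"
      by (rule sum_mset_mono) (rule size_branch_le)
    also have "\<dots> = size C * (size C + 1)" by simp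
    also have "\<dots> \<le> (n + 1) * size C" using assms that by simp
    finally show ?thesis .
  qed
  then have "(\<Sum>C\<in>#M. \<Sum>c\<in>#C. size (branch V E J C c)) \<le> (\<Sum>C\<in>#M. (n + 1) * size C)"
    by (rule sum_mset_mono)
  then show ?thesis by (simp add: sum_size_step sum_mset_distrib_left)
qed

lemma size_constr_sets_le: "\<forall>C\<in>#constr_sets V E J S k i. size C \<le> i + 1"
proof (induction i)
  case 0
  then show ?case by simp
next
  case (Suc i)
  then show ?case using size_step_le[OF Suc.IH] by simp
qed

lemma sum_size_constr_sets_le_fact:
  "(\<Sum>C\<in>#constr_sets V E J S k i. size C) \<le> fact (i + 1)"
proof (induction i)
  case 0
  then show ?case by simp
next
  case (Suc i)
  have "(\<Sum>C\<in>#constr_sets V E J S k (Suc i). size C)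
      \<le> (i + 2) * (\<Sum>C\<in>#constr_sets V E J S k i. size C)"
    using sum_size_step_le[OF size_constr_sets_le] by simp
  also have "\<dots> \<le> (i + 2) * fact (i + 1)"
    using Suc.IH by (rule mult_le_mono2)
  also have "\<dots> = fact (Suc i + 1)"
    by (simp add: fact_Suc)
  finally show ?case .
qed

theorem lemma3p4:
  fixes V :: "'a set" and E :: "'a \<Rightarrow> 'a \<Rightarrow> bool"
    and S :: "'a set" and J :: "nat \<Rightarrow> 'a set" and k l :: nat
  assumes "graph V E"
    and "k \<ge> 1" and "l \<ge> 1"
    and "indep_set V E S" and "card S = k"
    and "J 0 = S"
    and "\<forall>i\<le>l. indep_set V E (J i)"
  shows "(\<forall>i\<le>l. (\<Sum>C\<in>#constr_sets V E J S k i. size C) \<le> (fact (i + 1) :: nat))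
    \<and> (\<Sum>C\<in>#constr_sets V E J S k l. size C) \<le> (fact (l + 1) :: nat)"
  using sum_size_constr_sets_le_fact by blast

end
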